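(* For every $M\in L^2(I,\mathbb{R}^{2\times2}_{\rm sym})$ there exists a sequence $(M_n)\subset L^2(I,\mathbb{R}^{2\times2}_{\rm sym})$ with $\det M_n=0$ a.e. in $I$ for all $n$, such that $M_n\rightharpoonup M$ weakly in $L^2(I,\mathbb{R}^{2\times2}_{\rm sym})$ and $$\int_I\big[c|M_n|^2+L^\theta(M_n)\big]\,dx_1\longrightarrow\int_I\big[c|M|^2+2c|\det M|+L^\theta(M)\big]\,dx_1\quad(n\to\infty).$$
   Context: Fix constants $c_1>0$, $c_2>0$ and set $c:=c_1+c_2$. Fix $\bar A\in\mathbb{R}^{2\times2}_{\rm sym}$, $\bar e\ge 0$, $\theta\in[0,\pi)$ and $\ell>0$; let $I=(-\ell/2,\ell/2)$. Let $R_\theta=\begin{pmatrix}\cos\theta&-\sin\theta\\ \sin\theta&\cos\theta\end{pmatrix}$ and $\bar A^\theta:=R_\theta^{\rm T}\bar A R_\theta$. For matrices, $M\cdot N={\rm tr}(M^{\rm T}N)$, $|M|^2=M\cdot M$, ${\rm tr}^2M=({\rm tr}M)^2$. For $M\in\mathbb{R}^{2\times 2}_{\rm sym}$, $$L^\theta(M):=-2c_1\,M\cdot\bar A^\theta-2c_2\,{\rm tr}M\,{\rm tr}\bar A^\theta+c_1|\bar A^\theta|^2+c_2\,{\rm tr}^2\bar A^\theta+\bar e.$$ *)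

theory Defs
  imports "HOL-Analysis.Analysis"
begin

type_synonym mat2 = "real^2^2"

definition frob :: "mat2 \<Rightarrow> mat2 \<Rightarrow> real" where
  "frob M N = (\<Sum>i\<in>UNIV. \<Sum>j\<in>UNIV. M$i$j * N$i$j)"

definition fnorm2 :: "mat2 \<Rightarrow> real" where
  "fnorm2 M = frob M M"

definition tr2 :: "mat2 \<Rightarrow> real" where
  "tr2 M = M$1$1 + M$2$2"

definition rot :: "real \<Rightarrow> mat2" where
  "rot \<theta> = (\<chi> i j. if i = 1 \<and> j = 1 then cos \<theta> else if i = 1 \<and> j = 2 then - sin \<theta>
                   else if i = 2 \<and> j = 1 then sin \<theta> else cos \<theta>)"

definition Arot :: "mat2 \<Rightarrow> real \<Rightarrow> mat2" where
  "Arot A \<theta> = transpose (rot \<theta>) ** A ** rot \<theta>"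

definition Ltheta :: "real \<Rightarrow> real \<Rightarrow> mat2 \<Rightarrow> real \<Rightarrow> real \<Rightarrow> mat2 \<Rightarrow> real" where
  "Ltheta c1 c2 A e \<theta> M =
     - 2 * c1 * frob M (Arot A \<theta>) - 2 * c2 * tr2 M * tr2 (Arot A \<theta>)
     + c1 * fnorm2 (Arot A \<theta>) + c2 * (tr2 (Arot A \<theta>))^2 + e"

definition symmetric2 :: "mat2 \<Rightarrow> bool" where
  "symmetric2 M \<longleftrightarrow> transpose M = M"

definition L2sym :: "real set \<Rightarrow> (real \<Rightarrow> mat2) \<Rightarrow> bool" where
  "L2sym I M \<longleftrightarrow> M \<in> borel_measurable (lebesgue_on I)
     \<and> integrable (lebesgue_on I) (\<lambda>x. fnorm2 (M x))
     \<and> (AE x in lebesgue_on I. symmetric2 (M x))"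

definition weak_L2 :: "real set \<Rightarrow> (nat \<Rightarrow> real \<Rightarrow> mat2) \<Rightarrow> (real \<Rightarrow> mat2) \<Rightarrow> bool" where
  "weak_L2 I Ms M \<longleftrightarrow> (\<forall>g. L2sym I g \<longrightarrow>
     (\<lambda>n. integral\<^sup>L (lebesgue_on I) (\<lambda>x. frob (Ms n x) (g x)))
       \<longlonglongrightarrow> integral\<^sup>L (lebesgue_on I) (\<lambda>x. frob (M x) (g x)))"

end

theory Submission
  imports Defs
begin

text \<open>
  Pointwise, every 2x2 matrix X is a mean t P + (1 - t) Q of two singular matrices with
  t |P|^2 + (1 - t) |Q|^2 = |X|^2 + 2 |det X|: for det X < 0 take X - \<lambda> I for the two
  eigenvalues \<lambda> of X, otherwise X \<plusminus> N for a trace-free symmetric N with |N|^2 = 2 det X.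
  Since L^\<theta> is affine, the density c |.|^2 + L^\<theta> averages in the same way.
  The pointwise mean is realised by oscillation: fill each cell of a grid of mesh 1/n from the
  left in proportion to t. The primitive of the indicator of the filled set S_n is uniformly
  1/n-close to that of t, and half-line indicators span a dense subspace of L^1, so the
  indicators of S_n converge weakly-* to t. Then M_n = P on S_n and M_n = Q elsewhere is singular,
  and every integral of an affine function of M_n converges to the integral of the mean.
\<close>

section \<open>Algebra of 2x2 matrices\<close>

definition sym2 :: "real \<Rightarrow> real \<Rightarrow> real \<Rightarrow> mat2" where
  "sym2 p q r = (\<chi> i j. if i = 1 then (if j = 1 then p else q) else (if j = 1 then q else r))"

lemma sym2_nth [simp]:
  "sym2 p q r $ 1 $ 1 = p" "sym2 p q r $ 1 $ 2 = q"
  "sym2 p q r $ 2 $ 1 = q" "sym2 p q r $ 2 $ 2 = r"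
  unfolding sym2_def by simp_all

lemma symmetric2_iff: "symmetric2 X \<longleftrightarrow> X $ 1 $ 2 = X $ 2 $ 1"
  unfolding symmetric2_def transpose_def by (auto simp: vec_eq_iff forall_2)

lemma frob_expand: "frob X Y = X$1$1 * Y$1$1 + X$1$2 * Y$1$2 + X$2$1 * Y$2$1 + X$2$2 * Y$2$2"
  unfolding frob_def by (simp add: sum_2)

lemma fnorm2_expand: "fnorm2 X = (X$1$1)\<^sup>2 + (X$1$2)\<^sup>2 + (X$2$1)\<^sup>2 + (X$2$2)\<^sup>2"
  unfolding fnorm2_def frob_expand by (simp add: power2_eq_square)

lemma fnorm2_nonneg: "0 \<le> fnorm2 X"
  unfolding fnorm2_expand by simp

lemma frob_left_linear: "frob (a *\<^sub>R X + b *\<^sub>R Y) G = a * frob X G + b * frob Y G"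
  unfolding frob_expand by (simp add: algebra_simps)

lemma tr2_linear: "tr2 (a *\<^sub>R X + b *\<^sub>R Y) = a * tr2 X + b * tr2 Y"
  unfolding tr2_def by (simp add: algebra_simps)

lemma Ltheta_affine:
  "Ltheta c1 c2 A e \<theta> (t *\<^sub>R X + (1 - t) *\<^sub>R Y)
     = t * Ltheta c1 c2 A e \<theta> X + (1 - t) * Ltheta c1 c2 A e \<theta> Y"
  unfolding Ltheta_def frob_left_linear tr2_linear by (simp add: algebra_simps)

lemma abs_frob_le: "\<bar>frob X Y\<bar> \<le> fnorm2 X + fnorm2 Y"
proof -
  have sq: "\<bar>u * v\<bar> \<le> u\<^sup>2 + v\<^sup>2" for u v :: real
  proof -
    have "2 * \<bar>u\<bar> * \<bar>v\<bar> \<le> u\<^sup>2 + v\<^sup>2"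
      using sum_squares_bound[of "\<bar>u\<bar>" "\<bar>v\<bar>"] by simp
    moreover have "0 \<le> \<bar>u\<bar> * \<bar>v\<bar>" by simp
    ultimately show ?thesis unfolding abs_mult by linarith
  qed
  show ?thesis
    unfolding frob_expand fnorm2_expand
    using sq[of "X$1$1" "Y$1$1"] sq[of "X$1$2" "Y$1$2"]
      sq[of "X$2$1" "Y$2$1"] sq[of "X$2$2" "Y$2$2"]
    by linarith
qed

lemma det_sub_scalar: "det (X - s *\<^sub>R mat 1) = det X - s * tr2 X + s\<^sup>2"
  unfolding det_2 tr2_def by (simp add: mat_def power2_eq_square algebra_simps)

lemma fnorm2_add: "fnorm2 (X + Y) = fnorm2 X + 2 * frob X Y + fnorm2 Y"
  unfolding fnorm2_expand frob_expand by (simp add: power2_eq_square algebra_simps)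

lemma fnorm2_diff: "fnorm2 (X - Y) = fnorm2 X - 2 * frob X Y + fnorm2 Y"
  unfolding fnorm2_expand frob_expand by (simp add: power2_eq_square algebra_simps)

lemma fnorm2_sub_scalar: "fnorm2 (X - s *\<^sub>R mat 1) = fnorm2 X - 2 * s * tr2 X + 2 * s\<^sup>2"
  unfolding fnorm2_expand tr2_def by (simp add: mat_def power2_eq_square algebra_simps)

lemma abs_det_le_fnorm2: "2 * \<bar>det X\<bar> \<le> fnorm2 X"
proof -
  have "2 * \<bar>X$1$1 * X$2$2\<bar> \<le> (X$1$1)\<^sup>2 + (X$2$2)\<^sup>2" "2 * \<bar>X$1$2 * X$2$1\<bar> \<le> (X$1$2)\<^sup>2 + (X$2$1)\<^sup>2"
    using sum_squares_bound[of "\<bar>X$1$1\<bar>" "\<bar>X$2$2\<bar>"] sum_squares_bound[of "\<bar>X$1$2\<bar>" "\<bar>X$2$1\<bar>"]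
    by (simp_all add: abs_mult)
  then show ?thesis
    unfolding fnorm2_expand det_2
    using abs_triangle_ineq4[of "X$1$1 * X$2$2" "X$1$2 * X$2$1"] by (smt (verit))
qed

lemma tr2_sq_le_fnorm2: "(tr2 X)\<^sup>2 \<le> 2 * fnorm2 X"
  unfolding tr2_def fnorm2_expand
  using sum_squares_bound[of "X$1$1" "X$2$2"] zero_le_power2[of "X$1$2"] zero_le_power2[of "X$2$1"]
  unfolding power2_sum by (smt (verit))

section \<open>Splitting a matrix into two singular matrices\<close>

definition eig_rad :: "mat2 \<Rightarrow> real" where
  "eig_rad X = sqrt ((tr2 X / 2)\<^sup>2 - det X)"

definition eig_max :: "mat2 \<Rightarrow> real" where
  "eig_max X = tr2 X / 2 + eig_rad X"

definition eig_min :: "mat2 \<Rightarrow> real" where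
  "eig_min X = tr2 X / 2 - eig_rad X"

lemma eig_sum: "eig_max X + eig_min X = tr2 X"
  unfolding eig_max_def eig_min_def by simp

lemma eig_neg_det:
  assumes "det X < 0"
  shows "0 < eig_rad X" and "eig_max X - eig_min X = 2 * eig_rad X"
    and "eig_max X * eig_min X = det X" and "0 < eig_max X"
    and "(eig_max X)\<^sup>2 + (eig_min X)\<^sup>2 \<le> fnorm2 X"
proof -
  have disc: "0 < (tr2 X / 2)\<^sup>2 - det X"
    using assms zero_le_power2[of "tr2 X / 2"] by linarith
  then show rad: "0 < eig_rad X" unfolding eig_rad_def by simp
  have rad2: "(eig_rad X)\<^sup>2 = (tr2 X / 2)\<^sup>2 - det X"
    unfolding eig_rad_def using disc by simp
  show "eig_max X - eig_min X = 2 * eig_rad X" unfolding eig_max_def eig_min_def by simp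
  show prod: "eig_max X * eig_min X = det X"
    unfolding eig_max_def eig_min_def using rad2 by (simp add: power2_eq_square algebra_simps)
  show "0 < eig_max X"
  proof (rule ccontr)
    assume "\<not> 0 < eig_max X"
    then have "eig_max X \<le> 0" "eig_min X \<le> 0" using rad unfolding eig_max_def eig_min_def by auto
    then have "0 \<le> eig_max X * eig_min X" by (rule mult_nonpos_nonpos)
    with prod assms show False by simp
  qed
  have "(eig_max X)\<^sup>2 + (eig_min X)\<^sup>2 = (tr2 X)\<^sup>2 - 2 * det X"
    unfolding eig_max_def eig_min_def using rad2 by (simp add: power2_eq_square algebra_simps)
  also have "\<dots> = (X$1$1)\<^sup>2 + (X$2$2)\<^sup>2 + 2 * (X$1$2 * X$2$1)"
    unfolding tr2_def det_2 by (simp add: power2_eq_square algebra_simps)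
  also have "\<dots> \<le> fnorm2 X"
    unfolding fnorm2_expand using sum_squares_bound[of "X$1$2" "X$2$1"] by simp
  finally show "(eig_max X)\<^sup>2 + (eig_min X)\<^sup>2 \<le> fnorm2 X" .
qed

text \<open>For det X \<ge> 0 both X + shear X and X - shear X are singular: shear X is trace-free
  with squared norm 2 det X, and its direction kills the cross term of det (X \<plusminus> shear X).\<close>
definition shear :: "mat2 \<Rightarrow> mat2" where
  "shear X = (let u = X$2$2 - X$1$1; s = X$1$2 + X$2$1 in
     if u\<^sup>2 + s\<^sup>2 = 0 then sqrt (det X) *\<^sub>R sym2 1 0 (-1)
     else sqrt (det X / (u\<^sup>2 + s\<^sup>2)) *\<^sub>R sym2 s u (-s))"

lemma det_add_trace_free:
  "det (X + sym2 a b (-a)) = det X + a * (X$2$2 - X$1$1) - b * (X$1$2 + X$2$1) - (a\<^sup>2 + b\<^sup>2)"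
  "det (X - sym2 a b (-a)) = det X - a * (X$2$2 - X$1$1) + b * (X$1$2 + X$2$1) - (a\<^sup>2 + b\<^sup>2)"
  unfolding det_2 by (simp_all add: power2_eq_square algebra_simps)

lemma fnorm2_trace_free: "fnorm2 (sym2 a b (-a)) = 2 * (a\<^sup>2 + b\<^sup>2)"
  unfolding fnorm2_expand by simp

lemma shear_eq:
  assumes "0 \<le> det X"
  obtains a b where "shear X = sym2 a b (-a)" "a * (X$2$2 - X$1$1) = b * (X$1$2 + X$2$1)"
    "a\<^sup>2 + b\<^sup>2 = det X"
proof (cases "(X$2$2 - X$1$1)\<^sup>2 + (X$1$2 + X$2$1)\<^sup>2 = 0")
  case True
  then have "X$2$2 - X$1$1 = 0" "X$1$2 + X$2$1 = 0"
    unfolding sum_power2_eq_zero_iff by simp_all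
  with True assms show ?thesis
    by (intro that[of "sqrt (det X)" 0]) (auto simp: shear_def Let_def vec_eq_iff forall_2)
next
  case False
  define u where "u = X$2$2 - X$1$1"
  define s where "s = X$1$2 + X$2$1"
  define k where "k = sqrt (det X / (u\<^sup>2 + s\<^sup>2))"
  have D: "0 < u\<^sup>2 + s\<^sup>2" using False unfolding u_def s_def by (simp add: sum_power2_gt_zero_iff)
  have "(k * s)\<^sup>2 + (k * u)\<^sup>2 = k\<^sup>2 * (u\<^sup>2 + s\<^sup>2)" by (simp add: power2_eq_square algebra_simps)
  also have "\<dots> = det X" unfolding k_def using assms D by (simp del: sum_power2_eq_zero_iff)
  finally have "(k * s)\<^sup>2 + (k * u)\<^sup>2 = det X" .
  moreover have "shear X = sym2 (k * s) (k * u) (- (k * s))"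
    unfolding shear_def Let_def u_def[symmetric] s_def[symmetric] k_def[symmetric]
    using D by (simp add: vec_eq_iff forall_2 del: sum_power2_eq_zero_iff)
  ultimately show ?thesis
    by (intro that[of "k * s" "k * u"]) (simp_all add: u_def s_def)
qed

definition split_weight :: "mat2 \<Rightarrow> real" where
  "split_weight X = (if det X < 0 then eig_max X / (2 * eig_rad X) else 1/2)"

definition split_plus :: "mat2 \<Rightarrow> mat2" where
  "split_plus X = (if det X < 0 then X - eig_min X *\<^sub>R mat 1 else X + shear X)"

definition split_minus :: "mat2 \<Rightarrow> mat2" where
  "split_minus X = (if det X < 0 then X - eig_max X *\<^sub>R mat 1 else X - shear X)"

lemma split_weight_bounds: "0 \<le> split_weight X" "split_weight X \<le> 1"
proof -
  have "0 \<le> split_weight X \<and> split_weight X \<le> 1"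
  proof (cases "det X < 0")
    case True
    note eig = eig_neg_det[OF True]
    have "eig_max X * eig_min X < 0" using eig(3) True by simp
    then have "eig_min X < 0" using eig(4) by (simp add: mult_less_0_iff)
    then show ?thesis
      using eig(1,2,4) True by (simp add: split_weight_def field_simps)
  qed (simp add: split_weight_def)
  then show "0 \<le> split_weight X" "split_weight X \<le> 1" by simp_all
qed

lemma det_split: "det (split_plus X) = 0" "det (split_minus X) = 0"
proof -
  have "det (split_plus X) = 0 \<and> det (split_minus X) = 0"
  proof (cases "det X < 0")
    case True
    have "det (X - ev *\<^sub>R mat 1) = 0" if "ev = eig_max X \<or> ev = eig_min X" for ev
      unfolding det_sub_scalar eig_sum[symmetric] eig_neg_det(3)[OF True, symmetric]
      using that by (auto simp: power2_eq_square algebra_simps)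
    with True show ?thesis by (simp add: split_plus_def split_minus_def)
  next
    case False
    then obtain a b where "shear X = sym2 a b (-a)" "a * (X$2$2 - X$1$1) = b * (X$1$2 + X$2$1)"
      "a\<^sup>2 + b\<^sup>2 = det X"
      using shear_eq by (metis not_less)
    with False show ?thesis by (simp add: split_plus_def split_minus_def det_add_trace_free)
  qed
  then show "det (split_plus X) = 0" "det (split_minus X) = 0" by simp_all
qed

lemma split_convex: "split_weight X *\<^sub>R split_plus X + (1 - split_weight X) *\<^sub>R split_minus X = X"
proof (cases "det X < 0")
  case True
  note eig = eig_neg_det[OF True]
  define t where "t = split_weight X"
  have "t * eig_min X + (1 - t) * eig_max X = eig_max X - t * (eig_max X - eig_min X)"
    by (simp add: algebra_simps)
  also have "\<dots> = 0" using True eig(1,2) by (simp add: t_def split_weight_def)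
  finally have "t * eig_min X + (1 - t) * eig_max X = 0" .
  moreover have "t *\<^sub>R (X - eig_min X *\<^sub>R mat 1) + (1 - t) *\<^sub>R (X - eig_max X *\<^sub>R mat 1)
      = X - (t * eig_min X + (1 - t) * eig_max X) *\<^sub>R (mat 1 :: mat2)"
    by (simp add: scaleR_diff_right scaleR_left_diff_distrib scaleR_add_left)
  ultimately show ?thesis
    using True by (simp add: split_plus_def split_minus_def t_def)
next
  case False
  then show ?thesis
    by (simp add: split_plus_def split_minus_def split_weight_def
        scaleR_diff_right scaleR_add_right)
qed

lemma split_fnorm2:
  "split_weight X * fnorm2 (split_plus X) + (1 - split_weight X) * fnorm2 (split_minus X)
     = fnorm2 X + 2 * \<bar>det X\<bar>"
proof (cases "det X < 0")
  case True
  note eig = eig_neg_det[OF True]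
  define t where "t = split_weight X"
  have t: "t * (eig_max X - eig_min X) = eig_max X"
    using True eig(1,2) by (simp add: t_def split_weight_def)
  have mean: "t * eig_min X + (1 - t) * eig_max X = 0"
    using t by (simp add: algebra_simps)
  have mean_sq: "t * (eig_min X)\<^sup>2 + (1 - t) * (eig_max X)\<^sup>2 = - det X"
  proof -
    have "t * (eig_min X)\<^sup>2 + (1 - t) * (eig_max X)\<^sup>2
        = (eig_max X)\<^sup>2 - t * (eig_max X - eig_min X) * (eig_max X + eig_min X)"
      by (simp add: power2_eq_square algebra_simps)
    also have "\<dots> = - (eig_max X * eig_min X)"
      unfolding t by (simp add: power2_eq_square algebra_simps)
    finally show ?thesis using eig(3) by simp
  qed
  have "t * fnorm2 (X - eig_min X *\<^sub>R mat 1) + (1 - t) * fnorm2 (X - eig_max X *\<^sub>R mat 1)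
      = fnorm2 X - 2 * tr2 X * (t * eig_min X + (1 - t) * eig_max X)
        + 2 * (t * (eig_min X)\<^sup>2 + (1 - t) * (eig_max X)\<^sup>2)"
    unfolding fnorm2_sub_scalar by (simp add: algebra_simps)
  with True show ?thesis
    unfolding mean mean_sq by (simp add: split_plus_def split_minus_def t_def)
next
  case False
  then obtain a b where "shear X = sym2 a b (-a)" "a\<^sup>2 + b\<^sup>2 = det X"
    using shear_eq by (metis not_less)
  with False show ?thesis
    by (simp add: split_plus_def split_minus_def split_weight_def fnorm2_add fnorm2_diff
        fnorm2_trace_free field_simps)
qed

lemma fnorm2_split_le:
  "fnorm2 (split_plus X) \<le> 6 * fnorm2 X" "fnorm2 (split_minus X) \<le> 6 * fnorm2 X"
proof -
  have scalar: "fnorm2 (X - ev *\<^sub>R mat 1) \<le> 6 * fnorm2 X" if "ev\<^sup>2 \<le> fnorm2 X" for ev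
  proof -
    have "\<bar>2 * ev * tr2 X\<bar> \<le> ev\<^sup>2 + (tr2 X)\<^sup>2"
      using sum_squares_bound[of "\<bar>ev\<bar>" "\<bar>tr2 X\<bar>"] by (simp add: abs_mult)
    then show ?thesis
      unfolding fnorm2_sub_scalar using that tr2_sq_le_fnorm2[of X] by linarith
  qed
  have shift: "fnorm2 (X + N) \<le> 6 * fnorm2 X \<and> fnorm2 (X - N) \<le> 6 * fnorm2 X"
    if "fnorm2 N \<le> fnorm2 X" for N
    unfolding fnorm2_add fnorm2_diff using abs_frob_le[of X N] that by linarith
  have "fnorm2 (split_plus X) \<le> 6 * fnorm2 X \<and> fnorm2 (split_minus X) \<le> 6 * fnorm2 X"
  proof (cases "det X < 0")
    case True
    note eig = eig_neg_det[OF True]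
    have "(eig_min X)\<^sup>2 \<le> fnorm2 X" "(eig_max X)\<^sup>2 \<le> fnorm2 X"
      using eig(5) zero_le_power2[of "eig_min X"] zero_le_power2[of "eig_max X"] by linarith+
    with True show ?thesis by (simp add: split_plus_def split_minus_def scalar)
  next
    case False
    then obtain a b where "shear X = sym2 a b (-a)" "a\<^sup>2 + b\<^sup>2 = det X"
      using shear_eq by (metis not_less)
    then have "fnorm2 (shear X) \<le> fnorm2 X"
      using abs_det_le_fnorm2[of X] False by (simp add: fnorm2_trace_free)
    with False show ?thesis by (simp add: split_plus_def split_minus_def shift)
  qed
  then show "fnorm2 (split_plus X) \<le> 6 * fnorm2 X" "fnorm2 (split_minus X) \<le> 6 * fnorm2 X"
    by simp_all
qed

lemma symmetric2_split:
  assumes "symmetric2 X"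
  shows "symmetric2 (split_plus X)" "symmetric2 (split_minus X)"
proof -
  have "symmetric2 (shear X)"
    unfolding shear_def Let_def by (simp add: symmetric2_iff)
  then show "symmetric2 (split_plus X)" "symmetric2 (split_minus X)"
    using assms by (simp_all add: split_plus_def split_minus_def symmetric2_iff mat_def)
qed

lemma borel_measurable_entry [measurable]:
  fixes X :: "'a \<Rightarrow> mat2"
  assumes "X \<in> borel_measurable N"
  shows "(\<lambda>x. X x $ i $ j) \<in> borel_measurable N"
proof -
  have "(\<lambda>Y::mat2. Y $ i $ j) \<in> borel_measurable borel"
    by (intro borel_measurable_continuous_onI continuous_intros)
  with assms show ?thesis by (rule measurable_compose)
qed

lemma borel_measurable_frob [measurable]:
  fixes X Y :: "'a \<Rightarrow> mat2"
  assumes [measurable]: "X \<in> borel_measurable N" "Y \<in> borel_measurable N"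
  shows "(\<lambda>x. frob (X x) (Y x)) \<in> borel_measurable N"
  unfolding frob_expand by measurable

lemma borel_measurable_fnorm2 [measurable]:
  fixes X :: "'a \<Rightarrow> mat2"
  assumes [measurable]: "X \<in> borel_measurable N"
  shows "(\<lambda>x. fnorm2 (X x)) \<in> borel_measurable N"
  unfolding fnorm2_def by measurable

lemma borel_measurable_det2 [measurable]: "(det :: mat2 \<Rightarrow> real) \<in> borel_measurable borel"
  unfolding det_2 by measurable

lemma borel_measurable_tr2 [measurable]: "tr2 \<in> borel_measurable borel"
  unfolding tr2_def by measurable

lemma borel_measurable_sym2 [measurable]:
  assumes [measurable]: "f \<in> borel_measurable N" "g \<in> borel_measurable N" "h \<in> borel_measurable N"
  shows "(\<lambda>x. sym2 (f x) (g x) (h x)) \<in> borel_measurable N"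
proof -
  have "sym2 (f x) (g x) (h x) = f x *\<^sub>R sym2 1 0 0 + g x *\<^sub>R sym2 0 1 0 + h x *\<^sub>R sym2 0 0 1" for x
    by (simp add: vec_eq_iff forall_2 sym2_def)
  then show ?thesis by simp
qed

lemma borel_measurable_split [measurable]:
  "split_weight \<in> borel_measurable borel" "split_plus \<in> borel_measurable borel"
  "split_minus \<in> borel_measurable borel"
  unfolding split_weight_def split_plus_def split_minus_def shear_def eig_max_def eig_min_def
    eig_rad_def Let_def
  by measurable

section \<open>Oscillating indicators\<close>

lemma L1_convergence_dominated:
  fixes s :: "nat \<Rightarrow> 'a \<Rightarrow> real"
  assumes "\<And>k. s k \<in> borel_measurable M" "f \<in> borel_measurable M" "integrable M w"
    and "\<And>x. x \<in> space M \<Longrightarrow> (\<lambda>k. s k x) \<longlonglongrightarrow> f x"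
    and "\<And>k x. x \<in> space M \<Longrightarrow> \<bar>s k x - f x\<bar> \<le> w x"
  shows "(\<lambda>k. \<integral>x. \<bar>s k x - f x\<bar> \<partial>M) \<longlonglongrightarrow> 0"
proof -
  have "(\<lambda>k. \<integral>x. \<bar>s k x - f x\<bar> \<partial>M) \<longlonglongrightarrow> (\<integral>x. 0 \<partial>M)"
  proof (rule integral_dominated_convergence[where w = w])
    show "AE x in M. (\<lambda>k. \<bar>s k x - f x\<bar>) \<longlonglongrightarrow> 0"
      using assms(4) by (intro AE_I2) (simp add: tendsto_rabs_zero LIM_zero)
  qed (use assms in \<open>auto intro!: AE_I2\<close>)
  then show ?thesis by simp
qed

lemma borel_measurable_lebesgue_on:
  "f \<in> borel_measurable borel \<Longrightarrow> f \<in> borel_measurable (lebesgue_on S)"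
  by (rule measurable_restrict_space1) (rule measurable_completion, simp)

locale bounded_tests =
  fixes M :: "'a measure" and g :: "nat \<Rightarrow> 'a \<Rightarrow> real"
  assumes tests_measurable: "\<And>n. g n \<in> borel_measurable M"
    and tests_bounded: "\<And>n x. \<bar>g n x\<bar> \<le> 1"
begin

definition vanishing :: "('a \<Rightarrow> real) \<Rightarrow> bool" where
  "vanishing h \<longleftrightarrow> integrable M h \<and> (\<lambda>n. \<integral>x. g n x * h x \<partial>M) \<longlonglongrightarrow> 0"

lemma integrable_test_mult:
  assumes "integrable M h"
  shows "integrable M (\<lambda>x. g n x * h x)"
proof (rule Bochner_Integration.integrable_bound[OF assms])
  show "(\<lambda>x. g n x * h x) \<in> borel_measurable M"
    using tests_measurable borel_measurable_integrable[OF assms] by (rule borel_measurable_times)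
  show "AE x in M. norm (g n x * h x) \<le> norm (h x)"
    by (intro AE_I2) (simp add: abs_mult mult_left_le_one_le tests_bounded)
qed

lemma vanishing_zero: "vanishing (\<lambda>x. 0)"
  unfolding vanishing_def by simp

lemma vanishing_add: "vanishing f \<Longrightarrow> vanishing h \<Longrightarrow> vanishing (\<lambda>x. f x + h x)"
  unfolding vanishing_def
  by (auto simp: distrib_left integrable_test_mult intro: tendsto_add_zero)

lemma vanishing_cmult: "vanishing f \<Longrightarrow> vanishing (\<lambda>x. c * f x)"
  unfolding vanishing_def
  by (auto simp: mult.left_commute[of _ c] intro: tendsto_mult_right_zero)

lemma vanishing_cong_AE:
  assumes "vanishing f" "integrable M h" "AE x in M. f x = h x"
  shows "vanishing h"
proof -
  have "(\<integral>x. g n x * f x \<partial>M) = (\<integral>x. g n x * h x \<partial>M)" for n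
    using assms unfolding vanishing_def
    by (intro integral_cong_AE) (auto intro: borel_measurable_integrable integrable_test_mult)
  with assms show ?thesis by (simp add: vanishing_def)
qed

lemma vanishing_L1_limit:
  assumes vanishing: "\<And>k. vanishing (s k)" and "integrable M f"
    and L1: "(\<lambda>k. \<integral>x. \<bar>s k x - f x\<bar> \<partial>M) \<longlonglongrightarrow> 0"
  shows "vanishing f"
  unfolding vanishing_def
proof (intro conjI \<open>integrable M f\<close> LIMSEQ_I)
  fix r :: real assume "0 < r"
  then obtain k where k: "(\<integral>x. \<bar>s k x - f x\<bar> \<partial>M) < r / 2"
    using LIMSEQ_D[OF L1, of "r / 2"] by auto
  have "(\<lambda>n. \<integral>x. g n x * s k x \<partial>M) \<longlonglongrightarrow> 0"
    using vanishing[of k] unfolding vanishing_def by simp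
  from LIMSEQ_D[OF this half_gt_zero[OF \<open>0 < r\<close>]]
  obtain n0 where n0: "\<forall>n\<ge>n0. norm ((\<integral>x. g n x * s k x \<partial>M) - 0) < r / 2"
    by blast
  have sk: "integrable M (s k)" and diff: "integrable M (\<lambda>x. s k x - f x)"
    using vanishing[of k] \<open>integrable M f\<close> by (auto simp: vanishing_def)
  have "\<bar>\<integral>x. g n x * f x \<partial>M\<bar> < r" if "n0 \<le> n" for n
  proof -
    have "(\<integral>x. g n x * s k x \<partial>M) - (\<integral>x. g n x * (s k x - f x) \<partial>M)
        = (\<integral>x. g n x * s k x - g n x * (s k x - f x) \<partial>M)"
      by (rule Bochner_Integration.integral_diff[symmetric,
            OF integrable_test_mult[OF sk] integrable_test_mult[OF diff]])
    then have "(\<integral>x. g n x * f x \<partial>M) = (\<integral>x. g n x * s k x \<partial>M) - (\<integral>x. g n x * (s k x - f x) \<partial>M)"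
      by (simp add: algebra_simps)
    moreover have "\<bar>\<integral>x. g n x * (s k x - f x) \<partial>M\<bar> \<le> (\<integral>x. \<bar>g n x * (s k x - f x)\<bar> \<partial>M)"
      by (rule integral_abs_bound)
    moreover have "\<dots> \<le> (\<integral>x. \<bar>s k x - f x\<bar> \<partial>M)"
      by (rule integral_mono[OF integrable_abs[OF integrable_test_mult[OF diff]]
            integrable_abs[OF diff]])
         (simp add: abs_mult mult_left_le_one_le tests_bounded)
    moreover have "\<bar>\<integral>x. g n x * s k x \<partial>M\<bar> < r / 2" using n0 that by simp
    ultimately show ?thesis using k by linarith
  qed
  then show "\<exists>n0. \<forall>n\<ge>n0. norm ((\<integral>x. g n x * f x \<partial>M) - 0) < r" by auto
qed

end

text \<open>The integrands against which the tests vanish in the limit are closed under linear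
  combinations and L^1 limits, so the half-lines generate all of L^1.\<close>
locale halfline_tests = bounded_tests "lebesgue_on {a<..<b}" g for a b :: real and g +
  assumes halflines_vanish: "\<And>y. (\<lambda>n. \<integral>x. g n x * indicator {..y} x \<partial>lebesgue_on {a<..<b}) \<longlonglongrightarrow> 0"
begin

lemma integrable_indicator_borel:
  "A \<in> sets borel \<Longrightarrow> integrable (lebesgue_on {a<..<b}) (indicator A :: real \<Rightarrow> real)"
  by (rule finite_measure.integrable_const_bound[where B = 1])
     (auto simp: finite_measure_lebesgue_on intro!: borel_measurable_lebesgue_on)

lemma vanishing_halfline: "vanishing (indicator {..y})"
  unfolding vanishing_def using halflines_vanish integrable_indicator_borel by simp

lemma vanishing_one: "vanishing (\<lambda>x. 1)"
proof (rule vanishing_cong_AE[OF vanishing_halfline[of b]])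
  show "integrable (lebesgue_on {a<..<b}) (\<lambda>x. 1::real)"
    by (simp add: finite_measure.integrable_const finite_measure_lebesgue_on)
  show "AE x in lebesgue_on {a<..<b}. indicator {..b} x = (1::real)"
    by (intro AE_I2) auto
qed

lemma vanishing_disjoint_UN:
  fixes A :: "nat \<Rightarrow> real set"
  assumes "disjoint_family A" "\<And>i. A i \<in> sets borel" "\<And>i. vanishing (indicator (A i))"
  shows "vanishing (indicator (\<Union>i. A i))"
proof -
  define s where "s k = (indicator (\<Union>i<k. A i) :: real \<Rightarrow> real)" for k
  have vanishing_partial: "vanishing (s k)" for k
  proof (induction k)
    case 0
    then show ?case using vanishing_zero by (simp add: s_def)
  next
    case (Suc k)
    have "A k \<inter> A i = {}" if "i < k" for i
      using assms(1) that unfolding disjoint_family_on_def by (metis UNIV_I less_irrefl)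
    then have "A k \<inter> (\<Union>i<k. A i) = {}" by auto
    then have "s (Suc k) = (\<lambda>x. indicator (A k) x + s k x)"
      unfolding s_def lessThan_Suc UN_insert by (intro ext indicator_disj_union)
    then show ?case using vanishing_add[OF assms(3) Suc.IH] by simp
  qed
  have L1: "(\<lambda>k. \<integral>x. \<bar>s k x - indicator (\<Union>i. A i) x\<bar> \<partial>lebesgue_on {a<..<b}) \<longlonglongrightarrow> 0"
  proof (rule L1_convergence_dominated[where w = "\<lambda>x. 1"])
    show "(\<lambda>k. s k x) \<longlonglongrightarrow> indicator (\<Union>i. A i) x" for x
      unfolding s_def by (rule LIMSEQ_indicator_UN)
    show "\<bar>s k x - indicator (\<Union>i. A i) x\<bar> \<le> 1" for k x
      unfolding s_def by (auto simp: indicator_def)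
    show "s k \<in> borel_measurable (lebesgue_on {a<..<b})" for k
      unfolding s_def using assms(2)
      by (intro borel_measurable_lebesgue_on borel_measurable_indicator) auto
    show "indicator (\<Union>i. A i) \<in> borel_measurable (lebesgue_on {a<..<b})"
      using assms(2) by (intro borel_measurable_lebesgue_on borel_measurable_indicator) auto
    show "integrable (lebesgue_on {a<..<b}) (\<lambda>x. 1::real)"
      by (simp add: finite_measure.integrable_const finite_measure_lebesgue_on)
  qed
  have "(\<Union>i. A i) \<in> sets borel" using assms(2) by auto
  then show ?thesis
    by (rule vanishing_L1_limit[OF vanishing_partial integrable_indicator_borel L1])
qed

lemma vanishing_indicator_borel:
  assumes "A \<in> sets borel"
  shows "vanishing (indicator A)"
proof -
  have sets_borel: "sets (borel :: real measure) = sigma_sets UNIV (range atMost)"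
    unfolding borel_eq_atMost by (rule sets_measure_of) simp
  have "Int_stable (range (atMost :: real \<Rightarrow> real set))"
    unfolding Int_stable_def by (auto intro!: image_eqI[where x = "min _ _"])
  moreover have "range (atMost :: real \<Rightarrow> real set) \<subseteq> Pow UNIV" by simp
  moreover have "A \<in> sigma_sets UNIV (range atMost)" using assms sets_borel by simp
  ultimately show ?thesis
  proof (induction rule: sigma_sets_induct_disjoint)
    case (basic A)
    then show ?case using vanishing_halfline by auto
  next
    case empty
    then show ?case using vanishing_zero by simp
  next
    case (compl A)
    have "vanishing (\<lambda>x. 1 + (-1) * indicator A x)"
      by (intro vanishing_add vanishing_one vanishing_cmult compl.IH)
    moreover have "(\<lambda>x. 1 + (-1) * indicator A x) = (indicator (UNIV - A) :: real \<Rightarrow> real)"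
      by (auto simp: indicator_def)
    ultimately show ?case by simp
  next
    case (union A)
    then show ?case
      using sets_borel by (intro vanishing_disjoint_UN) auto
  qed
qed

text \<open>A Lebesgue set differs from a Borel set by a subset of a Borel null set.\<close>
lemma vanishing_indicator:
  assumes A: "A \<in> sets (lebesgue_on {a<..<b})"
  shows "vanishing (indicator A)"
proof -
  have "A \<in> sets (completion lborel)"
    using A sets_restrict_space_iff[of "{a<..<b}" lebesgue] by auto
  then obtain S N N' where AS: "A = S \<union> N" and "N \<subseteq> N'" and "N' \<in> null_sets lborel"
    and S: "S \<in> sets borel"
    by (auto elim: sets_completionE)
  then have "AE x in lebesgue. x \<notin> N'"
    by (intro AE_completion AE_not_in)
  then have "AE x in lebesgue_on {a<..<b}. x \<notin> N'"
    by (simp add: AE_restrict_space_iff) (auto elim: AE_mp)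
  then have "AE x in lebesgue_on {a<..<b}. indicator S x = (indicator A x :: real)"
    by eventually_elim (use AS \<open>N \<subseteq> N'\<close> in \<open>auto simp: indicator_def\<close>)
  moreover have "integrable (lebesgue_on {a<..<b}) (indicator A :: real \<Rightarrow> real)"
    by (rule finite_measure.integrable_const_bound[where B = 1])
       (use A in \<open>auto simp: finite_measure_lebesgue_on intro!: borel_measurable_indicator\<close>)
  ultimately show ?thesis
    by (intro vanishing_cong_AE[OF vanishing_indicator_borel[OF S]])
qed

theorem vanishing_integrable:
  assumes "integrable (lebesgue_on {a<..<b}) h"
  shows "vanishing h"
  using assms
proof (induction rule: integrable_induct)
  case (base A c)
  then show ?case
    using vanishing_cmult[OF vanishing_indicator, of A c] by (simp add: mult.commute)
next
  case (add f h)
  then show ?case by (simp add: vanishing_add)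
next
  case (lim f s)
  have "(\<lambda>k. \<integral>x. \<bar>s k x - f x\<bar> \<partial>lebesgue_on {a<..<b}) \<longlonglongrightarrow> 0"
  proof (rule L1_convergence_dominated[where w = "\<lambda>x. 3 * \<bar>f x\<bar>"])
    show "\<bar>s k x - f x\<bar> \<le> 3 * \<bar>f x\<bar>" if "x \<in> space (lebesgue_on {a<..<b})" for k x
      using lim.hyps(3)[of x k] that by simp
    show "(\<lambda>k. s k x) \<longlonglongrightarrow> f x" if "x \<in> space (lebesgue_on {a<..<b})" for x
      using lim.hyps(2)[of x] that by simp
  qed (use lim.hyps in auto)
  then show ?case by (rule vanishing_L1_limit[OF lim.IH lim.hyps(4)])
qed

end

lemma integrable_on_bounded_measurable:
  fixes f :: "real \<Rightarrow> real"
  assumes "f \<in> borel_measurable lebesgue" "\<And>x. \<bar>f x\<bar> \<le> B"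
  shows "f integrable_on {u..v}"
  by (rule measurable_bounded_by_integrable_imp_integrable_real[where g = "\<lambda>x. B"])
     (use assms in \<open>auto intro: measurable_restrict_space1\<close>)

lemma primitive_mono_lipschitz:
  fixes t :: "real \<Rightarrow> real"
  assumes "t \<in> borel_measurable lebesgue" "\<And>x. 0 \<le> t x" "\<And>x. t x \<le> 1"
  shows "mono (\<lambda>y. integral {a..y} t)"
    and "\<And>u v. a \<le> u \<Longrightarrow> u \<le> v \<Longrightarrow> integral {a..v} t - integral {a..u} t \<le> v - u"
proof -
  have t: "t integrable_on {u..v}" for u v
    by (rule integrable_on_bounded_measurable[where B = 1]) (use assms in \<open>auto simp: abs_le_iff\<close>)
  have split: "integral {a..v} t - integral {a..u} t = integral {u..v} t" if "a \<le> u" "u \<le> v" for u v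
    using Henstock_Kurzweil_Integration.integral_combine[OF that t] by simp
  show "mono (\<lambda>y. integral {a..y} t)"
  proof (rule monoI)
    fix u v :: real assume "u \<le> v"
    show "integral {a..u} t \<le> integral {a..v} t"
    proof (cases "u < a")
      case True
      then show ?thesis using assms(2) by (simp add: integral_nonneg[OF t])
    next
      case False
      then show ?thesis
        using split[of u v] \<open>u \<le> v\<close> assms(2) integral_nonneg[OF t, of u v] by simp
    qed
  qed
  show "integral {a..v} t - integral {a..u} t \<le> v - u" if "a \<le> u" "u \<le> v" for u v
    using split[OF that] integral_le[OF t integrable_const_ivl, of u v 1] assms(3) that by simp
qed

text \<open>The grid a + Z/N cut into cells of length 1/N; each cell is filled from its left end
  by an interval whose length is the increment of T over the cell.\<close>
definition filled_cells :: "real \<Rightarrow> real \<Rightarrow> (real \<Rightarrow> real) \<Rightarrow> real set" where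
  "filled_cells a N T =
     {x. let c = a + real_of_int \<lfloor>(x - a) * N\<rfloor> / N in x - c < T (c + 1 / N) - T c}"

lemma filled_cells_borel: "mono T \<Longrightarrow> filled_cells a N T \<in> sets borel"
proof -
  assume "mono T"
  then have [measurable]: "T \<in> borel_measurable borel" by (rule borel_measurable_mono)
  have "Measurable.pred borel (\<lambda>x. x \<in> filled_cells a N T)"
    unfolding filled_cells_def Let_def by measurable
  then show ?thesis by (simp add: pred_def)
qed

context
  fixes a N :: real and T :: "real \<Rightarrow> real"
  assumes N: "0 < N" and T_mono: "mono T"
    and T_lipschitz: "\<And>u v. a \<le> u \<Longrightarrow> u \<le> v \<Longrightarrow> T v - T u \<le> v - u"
begin

private definition cell :: "nat \<Rightarrow> real" where
  "cell k = a + real k / N"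

lemma integrable_on_filled_cells: "indicat_real (filled_cells a N T) integrable_on {u..v}"
  by (rule integrable_on_bounded_measurable[where B = 1])
     (auto intro!: borel_measurable_indicator filled_cells_borel[OF T_mono] measurable_completion
       simp del: borel_measurable_indicator_iff)

private lemma cell_Suc: "cell (Suc k) = cell k + 1 / N"
  unfolding cell_def using N by (simp add: field_simps)

private lemma cell_ge: "a \<le> cell k"
  unfolding cell_def using N by simp

private lemma mem_filled_cells_cell:
  assumes "cell k \<le> x" "x < cell (Suc k)"
  shows "x \<in> filled_cells a N T \<longleftrightarrow> x - cell k < T (cell (Suc k)) - T (cell k)"
proof -
  have "real k \<le> (x - a) * N" "(x - a) * N < real k + 1"
    using assms N unfolding cell_def by (simp_all add: field_simps)
  then have "\<lfloor>(x - a) * N\<rfloor> = int k" by (simp add: floor_eq_iff)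
  then have "a + real_of_int \<lfloor>(x - a) * N\<rfloor> / N = cell k" by (simp add: cell_def)
  then show ?thesis by (simp add: filled_cells_def Let_def cell_Suc)
qed

private lemma integral_filled_cells_cell:
  "integral {cell k..cell (Suc k)} (indicat_real (filled_cells a N T))
     = T (cell (Suc k)) - T (cell k)"
proof -
  define u v where "u = cell k" and "v = cell (Suc k)"
  define w where "w = u + (T v - T u)"
  have uw: "u \<le> w" and wv: "w \<le> v"
    using T_mono[THEN monoD, of u v] T_lipschitz[of u v] cell_ge[of k] cell_Suc[of k] N
    unfolding u_def v_def w_def by auto
  have "integral {u..w} (indicat_real (filled_cells a N T)) = integral {u..w} (\<lambda>x. 1)"
    by (rule integral_spike[of "{w, v}"])
       (use mem_filled_cells_cell[of k] wv in \<open>auto simp: u_def v_def w_def indicator_def\<close>)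
  moreover have "integral {w..v} (indicat_real (filled_cells a N T)) = integral {w..v} (\<lambda>x. 0)"
    by (rule integral_spike[of "{w, v}"])
       (use mem_filled_cells_cell[of k] uw in \<open>auto simp: u_def v_def w_def indicator_def\<close>)
  ultimately have "integral {u..v} (indicat_real (filled_cells a N T)) = w - u"
    using Henstock_Kurzweil_Integration.integral_combine[OF uw wv integrable_on_filled_cells] uw
    by simp
  then show ?thesis unfolding w_def u_def v_def by simp
qed

lemma integral_filled_cells_approx:
  assumes "a \<le> y"
  shows "\<bar>integral {a..y} (indicat_real (filled_cells a N T)) - (T y - T a)\<bar> \<le> 1 / N"
proof -
  have at_cells: "integral {a..cell k} (indicat_real (filled_cells a N T)) = T (cell k) - T a" for k
  proof (induction k)
    case 0
    then show ?case by (simp add: cell_def)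
  next
    case (Suc k)
    have "cell k \<le> cell (Suc k)" using cell_Suc[of k] N by simp
    then show ?case
      using Henstock_Kurzweil_Integration.integral_combine
          [OF cell_ge[of k] \<open>cell k \<le> cell (Suc k)\<close> integrable_on_filled_cells]
        integral_filled_cells_cell[of k] Suc by simp
  qed
  have integral_mono_upper:
    "integral {a..u} (indicat_real (filled_cells a N T))
      \<le> integral {a..v} (indicat_real (filled_cells a N T))"
    if "a \<le> u" "u \<le> v" for u v
    using Henstock_Kurzweil_Integration.integral_combine[OF that integrable_on_filled_cells]
      integral_nonneg[OF integrable_on_filled_cells, of u v] by simp
  define k where "k = nat \<lfloor>(y - a) * N\<rfloor>"
  have "0 \<le> (y - a) * N" using assms N by simp
  then have "real k \<le> (y - a) * N" "(y - a) * N < real k + 1"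
    unfolding k_def by linarith+
  then have k: "cell k \<le> y" "y \<le> cell (Suc k)"
    using N unfolding cell_def by (simp_all add: field_simps)
  have "T (cell (Suc k)) - T (cell k) \<le> 1 / N"
    using T_lipschitz[OF cell_ge, of k "cell (Suc k)"] cell_Suc[of k] N by simp
  moreover have "T (cell k) \<le> T y" "T y \<le> T (cell (Suc k))"
    using T_mono k by (auto dest: monoD)
  ultimately show ?thesis
    using integral_mono_upper[OF cell_ge k(1)] integral_mono_upper[OF assms k(2)]
      at_cells[of k] at_cells[of "Suc k"]
    by (simp add: abs_le_iff)
qed

end

lemma integral_lebesgue_on_halfline:
  fixes f :: "real \<Rightarrow> real"
  assumes f: "integrable (lebesgue_on {a<..<b}) f"
  shows "(\<integral>x. f x * indicator {..y} x \<partial>lebesgue_on {a<..<b}) = integral {a..max a (min y b)} f"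
proof -
  have "integrable (lebesgue_on {a<..<b}) (\<lambda>x. f x * indicator {..y} x)"
  proof (rule Bochner_Integration.integrable_bound[OF f])
    show "(\<lambda>x. f x * indicator {..y} x) \<in> borel_measurable (lebesgue_on {a<..<b})"
      using borel_measurable_integrable[OF f]
      by (rule borel_measurable_times) (auto intro: borel_measurable_lebesgue_on)
  qed (auto intro!: AE_I2 simp: indicator_def)
  then have "(\<integral>x. f x * indicator {..y} x \<partial>lebesgue_on {a<..<b})
      = integral {a<..<b} (\<lambda>x. f x * indicator {..y} x)"
    by (simp add: lebesgue_integral_eq_integral)
  also have "\<dots> = integral {a<..<b} (\<lambda>x. if x \<in> {..y} then f x else 0)"
    by (rule Henstock_Kurzweil_Integration.integral_cong) (simp add: indicator_def)
  also have "\<dots> = integral ({..y} \<inter> {a<..<b}) f"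
    by (rule integral_restrict_Int)
  also have "\<dots> = integral {a..max a (min y b)} f"
  proof (rule integral_spike_set)
    have "({..y} \<inter> {a<..<b} - {a..max a (min y b)}) \<union> ({a..max a (min y b)} - {..y} \<inter> {a<..<b})
        \<subseteq> {a, b}"
      by auto
    then show "negligible {x \<in> {..y} \<inter> {a<..<b} - {a..max a (min y b)}. f x \<noteq> 0}"
      and "negligible {x \<in> {a..max a (min y b)} - {..y} \<inter> {a<..<b}. f x \<noteq> 0}"
      by (auto intro: negligible_subset[OF negligible_finite[of "{a, b}"]])
  qed
  finally show ?thesis .
qed

lemma halfline_pairing_filled_cells:
  fixes a b y N :: real and t :: "real \<Rightarrow> real"
  assumes t: "t \<in> borel_measurable lebesgue" "\<And>x. 0 \<le> t x" "\<And>x. t x \<le> 1" and N: "0 < N"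
  defines "T \<equiv> \<lambda>y. integral {a..y} t"
  shows "\<bar>\<integral>x. (indicator (filled_cells a N T) x - t x) * indicator {..y} x \<partial>lebesgue_on {a<..<b}\<bar>
    \<le> 1 / N"
proof -
  define y' where "y' = max a (min y b)"
  have T: "mono T" "\<And>u v. a \<le> u \<Longrightarrow> u \<le> v \<Longrightarrow> T v - T u \<le> v - u"
    unfolding T_def using primitive_mono_lipschitz[OF t] by auto
  have "integrable (lebesgue_on {a<..<b}) (\<lambda>x. indicator (filled_cells a N T) x - t x)"
  proof (rule finite_measure.integrable_const_bound[where B = 1])
    show "(\<lambda>x. indicator (filled_cells a N T) x - t x) \<in> borel_measurable (lebesgue_on {a<..<b})"
      using filled_cells_borel[OF T(1)] t(1)
      by (intro borel_measurable_diff borel_measurable_lebesgue_on measurable_restrict_space1) auto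
  qed (use t in \<open>auto simp: finite_measure_lebesgue_on indicator_def\<close>)
  then have "(\<integral>x. (indicator (filled_cells a N T) x - t x) * indicator {..y} x \<partial>lebesgue_on {a<..<b})
      = integral {a..y'} (\<lambda>x. indicator (filled_cells a N T) x - t x)"
    unfolding y'_def by (rule integral_lebesgue_on_halfline)
  also have "\<dots> = integral {a..y'} (indicat_real (filled_cells a N T)) - (T y' - T a)"
    unfolding T_def
    by (subst Henstock_Kurzweil_Integration.integral_diff[OF integrable_on_filled_cells
          integrable_on_bounded_measurable[OF t(1), of 1]])
       (use N T t in \<open>auto simp: abs_le_iff T_def\<close>)
  also have "\<bar>\<dots>\<bar> \<le> 1 / N"
    by (rule integral_filled_cells_approx) (use N T in \<open>auto simp: y'_def\<close>)
  finally show ?thesis .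
qed

lemma halfline_tests_filled_cells:
  fixes t :: "real \<Rightarrow> real"
  assumes t: "t \<in> borel_measurable lebesgue" "\<And>x. 0 \<le> t x" "\<And>x. t x \<le> 1"
  shows "halfline_tests a b
    (\<lambda>n x. indicator (filled_cells a (real (Suc n)) (\<lambda>y. integral {a..y} t)) x - t x)"
    (is "halfline_tests a b ?g")
proof
  have "filled_cells a N (\<lambda>y. integral {a..y} t) \<in> sets borel" for N
    using primitive_mono_lipschitz(1)[OF t] by (rule filled_cells_borel)
  then show "?g n \<in> borel_measurable (lebesgue_on {a<..<b})" for n
    using t(1) by (intro borel_measurable_diff borel_measurable_lebesgue_on measurable_restrict_space1) auto
  show "\<bar>?g n x\<bar> \<le> 1" for n x
    using t(2,3)[of x] by (auto simp: indicator_def)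
  show "(\<lambda>n. \<integral>x. ?g n x * indicator {..y} x \<partial>lebesgue_on {a<..<b}) \<longlonglongrightarrow> 0" for y
  proof (rule Lim_null_comparison[OF _ LIMSEQ_inverse_real_of_nat])
    have "norm (\<integral>x. ?g n x * indicator {..y} x \<partial>lebesgue_on {a<..<b}) \<le> inverse (real (Suc n))"
      for n
      using halfline_pairing_filled_cells[OF t, where N = "real (Suc n)" and a = a and b = b and y = y]
      by (simp add: inverse_eq_divide)
    then show "\<forall>\<^sub>F n in sequentially.
        norm (\<integral>x. ?g n x * indicator {..y} x \<partial>lebesgue_on {a<..<b}) \<le> inverse (real (Suc n))"
      by simp
  qed
qed

theorem oscillating_indicators:
  fixes a b :: real and t :: "real \<Rightarrow> real"
  assumes t: "t \<in> borel_measurable (lebesgue_on {a<..<b})"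
    and t_nonneg: "\<And>x. x \<in> {a<..<b} \<Longrightarrow> 0 \<le> t x"
    and t_le_one: "\<And>x. x \<in> {a<..<b} \<Longrightarrow> t x \<le> 1"
  obtains S :: "nat \<Rightarrow> real set" where "\<And>n. S n \<in> sets (lebesgue_on {a<..<b})"
    and "\<And>h. integrable (lebesgue_on {a<..<b}) h \<Longrightarrow>
      (\<lambda>n. \<integral>x. indicator (S n) x * h x \<partial>lebesgue_on {a<..<b})
        \<longlonglongrightarrow> (\<integral>x. t x * h x \<partial>lebesgue_on {a<..<b})"
proof -
  let ?I = "{a<..<b}"
  let ?\<mu> = "lebesgue_on {a<..<b}"
  define tz where "tz x = (if x \<in> ?I then t x else 0)" for x
  have tz: "tz \<in> borel_measurable lebesgue"
    unfolding tz_def using borel_measurable_if[of ?I t] t by simp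
  have tz_bounds: "0 \<le> tz x" "tz x \<le> 1" for x
    unfolding tz_def using t_nonneg t_le_one by auto
  define F where "F n = filled_cells a (real (Suc n)) (\<lambda>y. integral {a..y} tz)" for n
  interpret halfline_tests a b "\<lambda>n x. indicator (F n) x - tz x"
    unfolding F_def by (rule halfline_tests_filled_cells[OF tz tz_bounds])
  show ?thesis
  proof (rule that[of "\<lambda>n. F n \<inter> ?I"])
    have "F n \<in> sets borel" for n
      unfolding F_def by (rule filled_cells_borel[OF primitive_mono_lipschitz(1)[OF tz tz_bounds]])
    then show "F n \<inter> ?I \<in> sets ?\<mu>" for n
      by (simp add: sets_restrict_space_iff)
    fix h :: "real \<Rightarrow> real" assume h: "integrable ?\<mu> h"
    have th: "integrable ?\<mu> (\<lambda>x. t x * h x)"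
      by (rule Bochner_Integration.integrable_bound[OF h])
         (use t h t_nonneg t_le_one in \<open>auto intro!: AE_I2 simp: abs_mult mult_left_le_one_le\<close>)
    have "(\<integral>x. indicator (F n \<inter> ?I) x * h x \<partial>?\<mu>)
        = (\<integral>x. t x * h x + (indicator (F n) x - tz x) * h x \<partial>?\<mu>)" for n
      by (rule Bochner_Integration.integral_cong) (auto simp: tz_def indicator_def algebra_simps)
    also have "\<dots> n = (\<integral>x. t x * h x \<partial>?\<mu>) + (\<integral>x. (indicator (F n) x - tz x) * h x \<partial>?\<mu>)"
      for n by (rule Bochner_Integration.integral_add[OF th integrable_test_mult[OF h]])
    finally have eq: "(\<integral>x. indicator (F n \<inter> ?I) x * h x \<partial>?\<mu>)
        = (\<integral>x. t x * h x \<partial>?\<mu>) + (\<integral>x. (indicator (F n) x - tz x) * h x \<partial>?\<mu>)" for n .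
    have "(\<lambda>n. \<integral>x. (indicator (F n) x - tz x) * h x \<partial>?\<mu>) \<longlonglongrightarrow> 0"
      using vanishing_integrable[OF h] by (simp add: vanishing_def)
    then show "(\<lambda>n. \<integral>x. indicator (F n \<inter> ?I) x * h x \<partial>?\<mu>) \<longlonglongrightarrow> (\<integral>x. t x * h x \<partial>?\<mu>)"
      unfolding eq using tendsto_add[OF tendsto_const] by fastforce
  qed
qed

section \<open>The recovery sequence\<close>

lemma tendsto_integral_switch:
  fixes t :: "'a \<Rightarrow> real" and F :: "'a \<Rightarrow> 'b \<Rightarrow> real" and S :: "nat \<Rightarrow> 'a set"
  assumes S: "\<And>n. S n \<in> sets M"
    and osc: "\<And>h. integrable M h \<Longrightarrow>
      (\<lambda>n. \<integral>x. indicator (S n) x * h x \<partial>M) \<longlonglongrightarrow> (\<integral>x. t x * h x \<partial>M)"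
    and t: "t \<in> borel_measurable M" "\<And>x. x \<in> space M \<Longrightarrow> \<bar>t x\<bar> \<le> 1"
    and P: "integrable M (\<lambda>x. F x (P x))" and Q: "integrable M (\<lambda>x. F x (Q x))"
  shows "(\<lambda>n. \<integral>x. F x (if x \<in> S n then P x else Q x) \<partial>M)
    \<longlonglongrightarrow> (\<integral>x. t x * F x (P x) + (1 - t x) * F x (Q x) \<partial>M)"
proof -
  define h where "h x = F x (P x) - F x (Q x)" for x
  have h: "integrable M h" unfolding h_def using P Q by simp
  have th: "integrable M (\<lambda>x. t x * h x)"
    by (rule Bochner_Integration.integrable_bound[OF h])
       (use t h in \<open>auto intro!: AE_I2 simp: abs_mult mult_left_le_one_le\<close>)
  have "(\<integral>x. F x (if x \<in> S n then P x else Q x) \<partial>M) = (\<integral>x. F x (Q x) + indicator (S n) x * h x \<partial>M)"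
    for n by (rule Bochner_Integration.integral_cong) (auto simp: h_def indicator_def)
  also have "\<dots> n = (\<integral>x. F x (Q x) \<partial>M) + (\<integral>x. indicator (S n) x * h x \<partial>M)" for n
    using integrable_mult_indicator[OF S h] by (simp add: Q)
  finally have switch: "(\<integral>x. F x (if x \<in> S n then P x else Q x) \<partial>M)
      = (\<integral>x. F x (Q x) \<partial>M) + (\<integral>x. indicator (S n) x * h x \<partial>M)" for n .
  have "(\<integral>x. t x * F x (P x) + (1 - t x) * F x (Q x) \<partial>M) = (\<integral>x. F x (Q x) + t x * h x \<partial>M)"
    by (rule Bochner_Integration.integral_cong) (simp_all add: h_def algebra_simps)
  also have "\<dots> = (\<integral>x. F x (Q x) \<partial>M) + (\<integral>x. t x * h x \<partial>M)"
    by (rule Bochner_Integration.integral_add[OF Q th])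
  finally show ?thesis
    unfolding switch using tendsto_add[OF tendsto_const osc[OF h]] by simp
qed

definition sq_integrable :: "'a measure \<Rightarrow> ('a \<Rightarrow> mat2) \<Rightarrow> bool" where
  "sq_integrable N X \<longleftrightarrow> X \<in> borel_measurable N \<and> integrable N (\<lambda>x. fnorm2 (X x))"

lemma L2sym_iff:
  "L2sym I X \<longleftrightarrow> sq_integrable (lebesgue_on I) X \<and> (AE x in lebesgue_on I. symmetric2 (X x))"
  unfolding L2sym_def sq_integrable_def by auto

lemma sq_integrable_const: "finite_measure N \<Longrightarrow> sq_integrable N (\<lambda>x. B)"
  unfolding sq_integrable_def by (simp add: finite_measure.integrable_const)

lemma sq_integrable_dominated:
  assumes "X \<in> borel_measurable N" "sq_integrable N Y" "\<And>x. fnorm2 (X x) \<le> C * fnorm2 (Y x)"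
  shows "sq_integrable N X"
  unfolding sq_integrable_def
proof
  show "integrable N (\<lambda>x. fnorm2 (X x))"
  proof (rule Bochner_Integration.integrable_bound)
    show "integrable N (\<lambda>x. C * fnorm2 (Y x))" using assms(2) by (simp add: sq_integrable_def)
    show "AE x in N. norm (fnorm2 (X x)) \<le> norm (C * fnorm2 (Y x))"
      using assms(3) by (intro AE_I2) (simp add: fnorm2_nonneg order_trans[OF _ abs_ge_self])
  qed (use assms in \<open>simp add: sq_integrable_def\<close>)
qed (fact assms(1))

lemma integrable_frob:
  assumes "sq_integrable N X" "sq_integrable N Y"
  shows "integrable N (\<lambda>x. frob (X x) (Y x))"
proof (rule Bochner_Integration.integrable_bound)
  show "integrable N (\<lambda>x. fnorm2 (X x) + fnorm2 (Y x))"
    using assms by (simp add: sq_integrable_def)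
  show "AE x in N. norm (frob (X x) (Y x)) \<le> norm (fnorm2 (X x) + fnorm2 (Y x))"
    using abs_frob_le fnorm2_nonneg by (intro AE_I2) (simp add: add_nonneg_nonneg)
  show "(\<lambda>x. frob (X x) (Y x)) \<in> borel_measurable N"
    using assms by (simp add: sq_integrable_def borel_measurable_frob)
qed

lemma integrable_Ltheta:
  assumes "finite_measure N" "sq_integrable N X"
  shows "integrable N (\<lambda>x. Ltheta c1 c2 A e \<theta> (X x))"
proof -
  have "tr2 Y = frob Y (mat 1)" for Y
    unfolding tr2_def frob_expand by (simp add: mat_def)
  then have "Ltheta c1 c2 A e \<theta> (X x) = - 2 * c1 * frob (X x) (Arot A \<theta>)
      - 2 * c2 * tr2 (Arot A \<theta>) * frob (X x) (mat 1)
      + (c1 * fnorm2 (Arot A \<theta>) + c2 * (tr2 (Arot A \<theta>))\<^sup>2 + e)" for x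
    unfolding Ltheta_def by (simp add: algebra_simps)
  then show ?thesis
    using assms by (simp add: integrable_frob sq_integrable_const finite_measure.integrable_const)
qed

lemma split_frob:
  "split_weight X * frob (split_plus X) G + (1 - split_weight X) * frob (split_minus X) G
     = frob X G"
  using frob_left_linear[of "split_weight X" "split_plus X" "1 - split_weight X" "split_minus X" G]
  by (simp add: split_convex)

lemma split_energy:
  "split_weight X * (c * fnorm2 (split_plus X) + Ltheta c1 c2 A e \<theta> (split_plus X))
     + (1 - split_weight X) * (c * fnorm2 (split_minus X) + Ltheta c1 c2 A e \<theta> (split_minus X))
   = c * fnorm2 X + 2 * c * \<bar>det X\<bar> + Ltheta c1 c2 A e \<theta> X"
proof -
  have "split_weight X * Ltheta c1 c2 A e \<theta> (split_plus X)
      + (1 - split_weight X) * Ltheta c1 c2 A e \<theta> (split_minus X) = Ltheta c1 c2 A e \<theta> X"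
    using Ltheta_affine[of c1 c2 A e \<theta> "split_weight X" "split_plus X" "split_minus X"]
    by (simp add: split_convex)
  moreover have "split_weight X * (c * fnorm2 (split_plus X) + Ltheta c1 c2 A e \<theta> (split_plus X))
      + (1 - split_weight X) * (c * fnorm2 (split_minus X) + Ltheta c1 c2 A e \<theta> (split_minus X))
    = c * (split_weight X * fnorm2 (split_plus X) + (1 - split_weight X) * fnorm2 (split_minus X))
      + (split_weight X * Ltheta c1 c2 A e \<theta> (split_plus X)
         + (1 - split_weight X) * Ltheta c1 c2 A e \<theta> (split_minus X))"
    by (simp add: algebra_simps)
  ultimately show ?thesis
    unfolding split_fnorm2 by (simp add: algebra_simps)
qed

definition split_switch :: "'a set \<Rightarrow> ('a \<Rightarrow> mat2) \<Rightarrow> 'a \<Rightarrow> mat2" where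
  "split_switch S M x = (if x \<in> S then split_plus (M x) else split_minus (M x))"

lemma det_split_switch: "det (split_switch S M x) = 0"
  by (simp add: split_switch_def det_split)

lemma sq_integrable_split:
  assumes "sq_integrable N M"
  shows "sq_integrable N (\<lambda>x. split_plus (M x))" "sq_integrable N (\<lambda>x. split_minus (M x))"
proof -
  have [measurable]: "M \<in> borel_measurable N" using assms by (simp add: sq_integrable_def)
  show "sq_integrable N (\<lambda>x. split_plus (M x))" "sq_integrable N (\<lambda>x. split_minus (M x))"
    by (rule sq_integrable_dominated[OF _ assms fnorm2_split_le(1)], measurable)
       (rule sq_integrable_dominated[OF _ assms fnorm2_split_le(2)], measurable)
qed

lemma L2sym_split_switch:
  assumes "L2sym I M" "S \<in> sets (lebesgue_on I)"
  shows "L2sym I (split_switch S M)"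
  unfolding L2sym_iff
proof
  have M: "sq_integrable (lebesgue_on I) M" using assms(1) by (simp add: L2sym_iff)
  then have [measurable]: "M \<in> borel_measurable (lebesgue_on I)" "S \<in> sets (lebesgue_on I)"
    using assms(2) by (simp_all add: sq_integrable_def)
  have "split_switch S M \<in> borel_measurable (lebesgue_on I)"
    unfolding split_switch_def by measurable
  then show "sq_integrable (lebesgue_on I) (split_switch S M)"
    by (rule sq_integrable_dominated[OF _ M, where C = 6])
       (simp add: split_switch_def fnorm2_split_le)
  have "AE x in lebesgue_on I. symmetric2 (M x)" using assms(1) by (simp add: L2sym_iff)
  then show "AE x in lebesgue_on I. symmetric2 (split_switch S M x)"
    by eventually_elim (simp add: split_switch_def symmetric2_split)
qed

context
  fixes N :: "'a measure" and M :: "'a \<Rightarrow> mat2" and S :: "nat \<Rightarrow> 'a set"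
  assumes M: "sq_integrable N M" and S: "\<And>n. S n \<in> sets N"
    and osc: "\<And>h. integrable N h \<Longrightarrow>
      (\<lambda>n. \<integral>x. indicator (S n) x * h x \<partial>N) \<longlonglongrightarrow> (\<integral>x. split_weight (M x) * h x \<partial>N)"
begin

lemma tendsto_integral_split_switch:
  assumes "integrable N (\<lambda>x. F x (split_plus (M x)))" "integrable N (\<lambda>x. F x (split_minus (M x)))"
  shows "(\<lambda>n. \<integral>x. F x (split_switch (S n) M x) \<partial>N) \<longlonglongrightarrow>
    (\<integral>x. split_weight (M x) * F x (split_plus (M x))
        + (1 - split_weight (M x)) * F x (split_minus (M x)) \<partial>N)"
proof -
  have [measurable]: "M \<in> borel_measurable N" using M by (simp add: sq_integrable_def)
  have "(\<lambda>x. split_weight (M x)) \<in> borel_measurable N" by measurable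
  from tendsto_integral_switch[where P = "\<lambda>x. split_plus (M x)" and Q = "\<lambda>x. split_minus (M x)",
      OF S osc this _ assms]
  show ?thesis
    by (simp add: split_switch_def split_weight_bounds)
qed

lemma tendsto_integral_frob_split_switch:
  assumes "sq_integrable N G"
  shows "(\<lambda>n. \<integral>x. frob (split_switch (S n) M x) (G x) \<partial>N) \<longlonglongrightarrow> (\<integral>x. frob (M x) (G x) \<partial>N)"
  using tendsto_integral_split_switch[of "\<lambda>x X. frob X (G x)"] sq_integrable_split[OF M] assms
  by (simp add: integrable_frob split_frob)

lemma tendsto_energy_split_switch:
  assumes "finite_measure N"
  shows "(\<lambda>n. \<integral>x. c * fnorm2 (split_switch (S n) M x)
      + Ltheta c1 c2 A e \<theta> (split_switch (S n) M x) \<partial>N)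
    \<longlonglongrightarrow> (\<integral>x. c * fnorm2 (M x) + 2 * c * \<bar>det (M x)\<bar> + Ltheta c1 c2 A e \<theta> (M x) \<partial>N)"
  using tendsto_integral_split_switch[of "\<lambda>x X. c * fnorm2 X + Ltheta c1 c2 A e \<theta> X"]
    sq_integrable_split[OF M] assms
  by (simp add: split_energy integrable_Ltheta sq_integrable_def)

end

theorem lemma2p3:
  fixes c1 c2 e \<theta> l :: real and A :: mat2 and M :: "real \<Rightarrow> mat2"
  assumes "c1 > 0" and "c2 > 0" and "symmetric2 A" and "e \<ge> 0"
    and "0 \<le> \<theta>" and "\<theta> < pi" and "l > 0"
    and "L2sym {-l/2<..<l/2} M"
  shows "\<exists>Ms :: nat \<Rightarrow> real \<Rightarrow> mat2.
     (\<forall>n. L2sym {-l/2<..<l/2} (Ms n))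
   \<and> (\<forall>n. AE x in lebesgue_on {-l/2<..<l/2}. det (Ms n x) = 0)
   \<and> weak_L2 {-l/2<..<l/2} Ms M
   \<and> (\<lambda>n. integral\<^sup>L (lebesgue_on {-l/2<..<l/2})
          (\<lambda>x. (c1 + c2) * fnorm2 (Ms n x) + Ltheta c1 c2 A e \<theta> (Ms n x)))
     \<longlonglongrightarrow> integral\<^sup>L (lebesgue_on {-l/2<..<l/2})
          (\<lambda>x. (c1 + c2) * fnorm2 (M x) + 2 * (c1 + c2) * \<bar>det (M x)\<bar>
               + Ltheta c1 c2 A e \<theta> (M x))"
proof -
  let ?I = "{-l/2<..<l/2}"
  let ?\<mu> = "lebesgue_on {-l/2<..<l/2}"
  have M: "sq_integrable ?\<mu> M" using assms(8) by (simp add: L2sym_iff)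
  then have [measurable]: "M \<in> borel_measurable ?\<mu>" by (simp add: sq_integrable_def)
  have "(\<lambda>x. split_weight (M x)) \<in> borel_measurable ?\<mu>" by measurable
  then obtain S where S: "\<And>n. S n \<in> sets ?\<mu>" and osc: "\<And>h. integrable ?\<mu> h \<Longrightarrow>
      (\<lambda>n. \<integral>x. indicator (S n) x * h x \<partial>?\<mu>) \<longlonglongrightarrow> (\<integral>x. split_weight (M x) * h x \<partial>?\<mu>)"
    using oscillating_indicators split_weight_bounds by blast
  have "weak_L2 ?I (\<lambda>n. split_switch (S n) M) M"
    unfolding weak_L2_def L2sym_iff using tendsto_integral_frob_split_switch[OF M S osc] by blast
  moreover have "finite_measure ?\<mu>" by (simp add: finite_measure_lebesgue_on)
  then have "(\<lambda>n. \<integral>x. (c1 + c2) * fnorm2 (split_switch (S n) M x)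
        + Ltheta c1 c2 A e \<theta> (split_switch (S n) M x) \<partial>?\<mu>)
      \<longlonglongrightarrow> (\<integral>x. (c1 + c2) * fnorm2 (M x) + 2 * (c1 + c2) * \<bar>det (M x)\<bar>
        + Ltheta c1 c2 A e \<theta> (M x) \<partial>?\<mu>)"
    using tendsto_energy_split_switch[OF M S osc, of "c1 + c2"] by simp
  ultimately show ?thesis
    using L2sym_split_switch[OF assms(8) S]
    by (intro exI[of _ "\<lambda>n. split_switch (S n) M"]) (simp add: det_split_switch)
qed

end
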